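(* Let $w\ge1$ be an integer and let $C=(C_{st})_{s,t\ge1}$ be the infinite matrix defined below. Then every entry $C_{st}$ is an integer, and $C$ has determinant $1$ (it is lower triangular with respect to divisibility with diagonal entries equal to $1$), so that $C^{-1}$ also has integer entries.
   Context: For $n\in\mathbb Z$, $\omega(n)$ is the number of distinct primes dividing $n$, and $I(n)=\{k\in\mathbb Z: k\mid n,\ n/k \text{ square-free}\}$. The infinite matrix $C=(C_{st})_{s,t\ge1}$ is given by: if $t\mid s$, $$C_{st}=\frac{(-1)^{sw}}{(s/t)^2}\sum_{k\in I(s/t)}(-1)^{\omega(s/(kt))}(-1)^{ktw}\binom{k(tw-1)-1}{k-1},$$ and $C_{st}=0$ if $t\nmid s$. *)

theory Defs
  imports "HOL-Computational_Algebra.Computational_Algebra"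
begin

definition omega :: "nat \<Rightarrow> nat" where
  "omega n = card (prime_factors n)"

definition Iset :: "nat \<Rightarrow> nat set" where
  "Iset n = {k. 0 < k \<and> k dvd n \<and> squarefree (n div k)}"

definition Cmat :: "nat \<Rightarrow> nat \<Rightarrow> nat \<Rightarrow> rat" where
  "Cmat w s t =
     (if t dvd s then
        (-1) ^ (s * w) / of_nat ((s div t) ^ 2) *
        (\<Sum>k\<in>Iset (s div t).
           (-1) ^ omega (s div (k * t)) * (-1) ^ (k * t * w) *
           ((of_int (int k * (int t * int w - 1) - 1) :: rat) gchoose (k - 1)))
      else 0)"

end

(*
  Put q = s/t and m = t w. Then C_st = (-1)^(sw) q^-2 \<Sum>_{k\<in>I(q)} (-1)^\<omega>(q/k) g(k) with
  g(k) = (-1)^(km) binom(k(m-1)-1, k-1).  For a prime p and n \<ge> 1, binom(pn(m-1)-1, pn-1) is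
  binom(n(m-1)-1, n-1) times the product of (pn(m-1) - j)/j over 1 \<le> j < pn prime to p; pairing
  j with pn - j shows that this product is 1 modulo p^(2(v_p(n)+1)), except for p = 2 and n odd,
  where the unpaired factor j = n gives 2m - 3 \<equiv> (-1)^m (mod 4), compensated by the sign of g.
  Hence p^(2(v_p(n)+1)) divides g(pn) - g(n).  Matching each k \<in> I(q) with p not dividing q/k against
  k/p \<in> I(q) shows that p^(2 v_p(q)) divides the sum, for every p, so q^2 does and C_st \<in> \<int>.
  Finally C is unitriangular with respect to divisibility, so forward substitution inverts it
  over \<int>.
*)

theory Submission
  imports Defs "HOL-Number_Theory.Cong"
begin

text \<open>The rational binomial coefficient is an integer (see \<open>of_int_hbinom\<close>); the floor only changes its type.\<close>
definition hbinom :: "nat \<Rightarrow> nat \<Rightarrow> int" where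
  "hbinom m k = \<lfloor>(of_int (int k * (int m - 1) - 1) :: rat) gchoose (k - 1)\<rfloor>"

lemma of_int_hbinom:
  "(of_int (hbinom m k) :: 'a :: field_char_0) = of_int (int k * (int m - 1) - 1) gchoose (k - 1)"
  by (simp only: hbinom_def of_int_gbinomial[symmetric] floor_of_int)

definition signed_hbinom :: "nat \<Rightarrow> nat \<Rightarrow> int" where
  "signed_hbinom m k = (-1) ^ (k * m) * hbinom m k"

lemma fact_pred_eq_prod: "fact (k - 1) = (\<Prod>j\<in>{1..<k}. int j)"
  by (cases k) (simp_all add: fact_prod atLeastLessThanSuc_atLeastAtMost)

lemma fact_mult_hbinom: "fact (k - 1) * hbinom m k = (\<Prod>j\<in>{1..<k}. int k * (int m - 1) - int j)"
proof (cases k)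
  case (Suc n)
  have "fact n * hbinom m k = (\<Prod>i=0..<n. int k * (int m - 1) - 1 - int i)"
    unfolding hbinom_def of_int_gbinomial[symmetric] floor_of_int Suc diff_Suc_1
    by (rule gbinomial_int_mult_fact)
  also have "\<dots> = (\<Prod>j\<in>{1..<k}. int k * (int m - 1) - int j)"
    unfolding Suc One_nat_def prod.shift_bounds_Suc_ivl by (simp add: algebra_simps)
  finally show ?thesis using Suc by simp
qed (simp add: hbinom_def)

lemma prod_split_multiples:
  fixes f :: "nat \<Rightarrow> 'a :: comm_monoid_mult" and p n :: nat
  assumes "p > 0"
  shows "(\<Prod>j\<in>{1..<p*n}. f j) = (\<Prod>j\<in>{j\<in>{1..<p*n}. \<not> p dvd j}. f j) * (\<Prod>i\<in>{1..<n}. f (p * i))"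
proof -
  have "{1..<p*n} \<inter> {j. p dvd j} = (\<lambda>i. p * i) ` {1..<n}"
  proof (intro equalityI subsetI)
    fix j assume "j \<in> {1..<p*n} \<inter> {j. p dvd j}"
    then obtain i where "j = p * i" "1 \<le> p * i" "p * i < p * n" by auto
    then show "j \<in> (\<lambda>i. p * i) ` {1..<n}" by (auto simp: Suc_le_eq)
  qed (use assms in auto)
  moreover have "{1..<p*n} - {j. p dvd j} = {j\<in>{1..<p*n}. \<not> p dvd j}" by auto
  moreover have "inj_on (\<lambda>i. p * i) {1..<n}" using assms by (simp add: inj_on_def)
  ultimately show ?thesis
    using prod.Int_Diff[of "{1..<p*n}" f "{j. p dvd j}"] by (simp add: prod.reindex mult.commute)
qed

lemma hbinom_mult_relation:
  fixes p n m :: nat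
  defines "U \<equiv> {j\<in>{1..<p*n}. \<not> p dvd j}" and "M \<equiv> int (p * n) * (int m - 1)"
  assumes "p > 0"
  shows "hbinom m (p * n) * (\<Prod>j\<in>U. int j) = (\<Prod>j\<in>U. M - int j) * hbinom m n"
proof -
  define X :: int where "X = int p ^ (n - 1) * fact (n - 1)"
  have "fact (p*n - 1) = (\<Prod>j\<in>U. int j) * (\<Prod>i\<in>{1..<n}. int (p * i))"
    unfolding fact_pred_eq_prod U_def by (rule prod_split_multiples) fact
  also have "(\<Prod>i\<in>{1..<n}. int (p * i)) = X"
    unfolding X_def fact_pred_eq_prod by (simp add: prod.distrib)
  finally have fact_eq: "fact (p*n - 1) = (\<Prod>j\<in>U. int j) * X" .
  have "fact (p*n - 1) * hbinom m (p*n) = (\<Prod>j\<in>U. M - int j) * (\<Prod>i\<in>{1..<n}. M - int (p * i))"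
    unfolding fact_mult_hbinom U_def M_def by (rule prod_split_multiples) fact
  also have "(\<Prod>i\<in>{1..<n}. M - int (p * i)) = (\<Prod>i\<in>{1..<n}. int p * (int n * (int m - 1) - int i))"
    by (simp add: M_def algebra_simps)
  also have "\<dots> = X * hbinom m n"
    unfolding X_def prod.distrib mult.assoc fact_mult_hbinom by simp
  finally have "fact (p*n - 1) * hbinom m (p*n) = (\<Prod>j\<in>U. M - int j) * X * hbinom m n"
    by (simp add: mult.assoc)
  moreover have "X \<noteq> 0" using assms by (simp add: X_def)
  ultimately show ?thesis using fact_eq by (simp add: algebra_simps)
qed

lemma prod_cong_involution:
  fixes F G :: "'b \<Rightarrow> 'a :: unique_euclidean_semiring"
  assumes "finite U"
    and "\<And>j. j \<in> U \<Longrightarrow> \<sigma> j \<in> U \<and> \<sigma> j \<noteq> j \<and> \<sigma> (\<sigma> j) = j"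
    and "\<And>j. j \<in> U \<Longrightarrow> [F j * F (\<sigma> j) = G j * G (\<sigma> j)] (mod Q)"
  shows "[prod F U = prod G U] (mod Q)"
  using assms
proof (induction "card U" arbitrary: U rule: less_induct)
  case less
  show ?case
  proof (cases "U = {}")
    case False
    then obtain j where j: "j \<in> U" by blast
    define U' where "U' = U - {j, \<sigma> j}"
    have U: "U = insert j (insert (\<sigma> j) U')" "j \<notin> insert (\<sigma> j) U'" "\<sigma> j \<notin> U'"
      using less.prems(2)[OF j] j by (auto simp: U'_def)
    have "[prod F U' = prod G U'] (mod Q)"
    proof (rule less.hyps)
      show "card U' < card U" using less.prems(1) j by (auto simp: U'_def intro: psubset_card_mono)
      show "\<sigma> i \<in> U' \<and> \<sigma> i \<noteq> i \<and> \<sigma> (\<sigma> i) = i" if "i \<in> U'" for i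
      proof -
        have i: "i \<in> U" "i \<noteq> j" "i \<noteq> \<sigma> j" using that by (auto simp: U'_def)
        have "\<sigma> i \<in> U" "\<sigma> i \<noteq> i" "\<sigma> (\<sigma> i) = i" "\<sigma> (\<sigma> j) = j"
          using less.prems(2)[OF i(1)] less.prems(2)[OF j] by auto
        with i show ?thesis by (auto simp: U'_def)
      qed
    qed (use less.prems in \<open>auto simp: U'_def\<close>)
    moreover have "[F j * F (\<sigma> j) = G j * G (\<sigma> j)] (mod Q)" using less.prems(3) j .
    moreover have "prod H U = H j * H (\<sigma> j) * prod H U'" for H :: "'b \<Rightarrow> 'a"
    proof -
      have "finite U'" using less.prems(1) by (simp add: U'_def)
      with U show ?thesis by (simp add: mult.assoc)
    qed
    ultimately show ?thesis by (simp add: cong_mult)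
  qed simp
qed

lemma prod_reflection_cong:
  fixes P :: nat and M :: int
  assumes "int P dvd M" "finite V" "\<And>j. j \<in> V \<Longrightarrow> j < P \<and> P - j \<in> V \<and> 2 * j \<noteq> P"
  shows "[(\<Prod>j\<in>V. M - int j) = (\<Prod>j\<in>V. int j)] (mod (int P)\<^sup>2)"
proof (rule prod_cong_involution[where \<sigma>="\<lambda>j. P - j"])
  show "P - j \<in> V \<and> P - j \<noteq> j \<and> P - (P - j) = j" if "j \<in> V" for j
    using assms(3)[OF that] by auto
next
  fix j assume j: "j \<in> V"
  then have "j < P" using assms(3) by blast
  then have "(M - int j) * (M - int (P - j)) - int j * int (P - j) = M * (M - int P)"
    by (simp add: of_nat_diff algebra_simps)
  moreover have "(int P)\<^sup>2 dvd M * (M - int P)"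
    using assms(1) by (simp add: power2_eq_square mult_dvd_mono)
  ultimately show "[(M - int j) * (M - int (P - j)) = int j * int (P - j)] (mod (int P)\<^sup>2)"
    by (simp add: cong_iff_dvd_diff)
qed (fact assms)

lemma not_dvd_diff_nat:
  fixes p P j :: nat
  assumes "p dvd P" "j \<le> P" "\<not> p dvd j"
  shows "\<not> p dvd P - j"
  using assms dvd_diff_nat[of p P "P - j"] by auto

lemma coprime_prod_non_multiples:
  assumes "prime p" "\<And>j. j \<in> V \<Longrightarrow> \<not> p dvd j"
  shows "coprime (\<Prod>j\<in>V. int j) (int p ^ k)"
proof (rule prod_coprime_left)
  fix j assume "j \<in> V"
  then have "coprime p j" using assms by (simp add: prime_imp_coprime)
  then show "coprime (int j) (int p ^ k)" by (simp add: coprime_commute)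
qed

lemma hbinom_prime_mult_cong:
  fixes p n m :: nat
  assumes p: "prime p" and not_two_odd: "\<not> (p = 2 \<and> odd n)"
  shows "[hbinom m (p * n) = hbinom m n] (mod int p ^ (2 * (multiplicity p n + 1)))"
proof -
  define P where "P = p * n"
  define U where "U = {j\<in>{1..<P}. \<not> p dvd j}"
  define M where "M = int P * (int m - 1)"
  define Q where "Q = int p ^ (2 * (multiplicity p n + 1))"
  have "p ^ multiplicity p n dvd n" by (rule multiplicity_dvd)
  then have "int p ^ (multiplicity p n + 1) dvd int P"
    by (simp add: P_def mult_dvd_mono flip: of_nat_power)
  then have "Q dvd (int P)\<^sup>2"
    unfolding Q_def mult.commute[of 2 "multiplicity p n + 1"] power_mult by (rule dvd_power_same)
  moreover have "[(\<Prod>j\<in>U. M - int j) = (\<Prod>j\<in>U. int j)] (mod (int P)\<^sup>2)"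
  proof (rule prod_reflection_cong)
    fix j assume j: "j \<in> U"
    have "2 * j \<noteq> P"
    proof
      assume "2 * j = P"
      then have "p dvd 2 * j" by (simp add: P_def)
      with j p have "p dvd 2" by (auto simp: U_def prime_dvd_mult_iff)
      then have "p = 2" using p by (simp add: primes_dvd_imp_eq)
      with \<open>2 * j = P\<close> j not_two_odd show False by (auto simp: U_def P_def)
    qed
    moreover have "\<not> p dvd P - j" using j by (intro not_dvd_diff_nat) (auto simp: U_def P_def)
    ultimately show "j < P \<and> P - j \<in> U \<and> 2 * j \<noteq> P"
      using j by (auto simp: U_def)
  qed (simp_all add: M_def U_def)
  ultimately have "[(\<Prod>j\<in>U. M - int j) = (\<Prod>j\<in>U. int j)] (mod Q)"
    by (metis cong_dvd_modulus)
  then have "[(\<Prod>j\<in>U. M - int j) * hbinom m n = (\<Prod>j\<in>U. int j) * hbinom m n] (mod Q)"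
    by (rule cong_scalar_right)
  moreover have "hbinom m (p * n) * (\<Prod>j\<in>U. int j) = (\<Prod>j\<in>U. M - int j) * hbinom m n"
    unfolding U_def M_def P_def using p by (intro hbinom_mult_relation prime_gt_0_nat)
  ultimately have "[hbinom m (p * n) * (\<Prod>j\<in>U. int j) = hbinom m n * (\<Prod>j\<in>U. int j)] (mod Q)"
    by (simp add: mult.commute)
  moreover have "coprime (\<Prod>j\<in>U. int j) Q"
    unfolding Q_def using p by (rule coprime_prod_non_multiples) (simp add: U_def)
  ultimately show ?thesis by (simp add: Q_def cong_mult_rcancel)
qed

lemma hbinom_two_mult_relation:
  fixes n m :: nat
  defines "U \<equiv> {j\<in>{1..<2 * n}. \<not> 2 dvd j} - {n}" and "M \<equiv> int (2 * n) * (int m - 1)"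
  assumes "odd n"
  shows "hbinom m (2 * n) * (\<Prod>j\<in>U. int j) = (2 * int m - 3) * (\<Prod>j\<in>U. M - int j) * hbinom m n"
proof -
  have "n \<ge> 1" using odd_pos[OF assms(3)] by simp
  then have U: "{j\<in>{1..<2 * n}. \<not> 2 dvd j} = insert n U" "n \<notin> U" "finite U"
    using assms(3) by (auto simp: U_def)
  have "hbinom m (2 * n) * (\<Prod>j\<in>{j\<in>{1..<2 * n}. \<not> 2 dvd j}. int j)
      = (\<Prod>j\<in>{j\<in>{1..<2 * n}. \<not> 2 dvd j}. M - int j) * hbinom m n"
    unfolding M_def by (rule hbinom_mult_relation) simp
  moreover have "M - int n = int n * (2 * int m - 3)" by (simp add: M_def algebra_simps)
  ultimately have "int n * (hbinom m (2 * n) * (\<Prod>j\<in>U. int j))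
      = int n * ((2 * int m - 3) * (\<Prod>j\<in>U. M - int j) * hbinom m n)"
    unfolding U(1) using U(2,3) by (simp add: ac_simps)
  then show ?thesis using \<open>n \<ge> 1\<close> by simp
qed

text \<open>Here the factor \<open>j = n\<close> has no partner \<open>2n - j\<close>; it contributes \<open>2m - 3\<close>.\<close>
lemma hbinom_two_mult_cong:
  fixes n m :: nat
  assumes "odd n"
  shows "[hbinom m (2 * n) = (-1) ^ m * hbinom m n] (mod 4)"
proof -
  define U where "U = {j\<in>{1..<2 * n}. \<not> 2 dvd j} - {n}"
  define M where "M = int (2 * n) * (int m - 1)"
  have "[(\<Prod>j\<in>U. M - int j) = (\<Prod>j\<in>U. int j)] (mod (int (2 * n))\<^sup>2)"
  proof (rule prod_reflection_cong)
    fix j assume "j \<in> U"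
    then show "j < 2 * n \<and> 2 * n - j \<in> U \<and> 2 * j \<noteq> 2 * n"
      by (auto simp: U_def intro: not_dvd_diff_nat)
  qed (simp_all add: M_def U_def)
  then have E: "[(\<Prod>j\<in>U. M - int j) = (\<Prod>j\<in>U. int j)] (mod 4)"
    by (rule cong_dvd_modulus) (simp add: power2_eq_square)
  have "[2 * int m - 3 = (-1) ^ m] (mod 4)"
    by (cases "even m") (auto elim!: evenE oddE simp: cong_iff_dvd_diff algebra_simps)
  from cong_scalar_right[OF cong_mult[OF this E], of "hbinom m n"]
  have "[(2 * int m - 3) * (\<Prod>j\<in>U. M - int j) * hbinom m n
       = (-1) ^ m * hbinom m n * (\<Prod>j\<in>U. int j)] (mod 4)"
    by (simp add: ac_simps)
  then have "[hbinom m (2 * n) * (\<Prod>j\<in>U. int j) = (-1) ^ m * hbinom m n * (\<Prod>j\<in>U. int j)] (mod 4)"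
    using hbinom_two_mult_relation[OF assms, of m] by (simp add: U_def M_def)
  moreover have "coprime (\<Prod>j\<in>U. int j) (int 2 ^ 2)"
    by (rule coprime_prod_non_multiples) (auto simp: U_def)
  ultimately show ?thesis by (simp add: cong_mult_rcancel)
qed

lemma signed_hbinom_prime_mult_dvd:
  fixes p n m :: nat
  assumes p: "prime p"
  shows "int p ^ (2 * (multiplicity p n + 1)) dvd signed_hbinom m (p * n) - signed_hbinom m n"
proof (cases "p = 2 \<and> odd n")
  case True
  then have "multiplicity p n = 0" by (simp add: not_dvd_imp_multiplicity_0)
  moreover have "(-1 :: int) ^ (n * m) = (-1) ^ m" using True by (simp add: power_mult)
  ultimately show ?thesis
    using True hbinom_two_mult_cong[of n m] by (simp add: signed_hbinom_def cong_iff_dvd_diff)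
next
  case False
  have "(-1 :: int) ^ (p * n * m) = (-1) ^ (n * m)"
  proof (cases "p = 2")
    case False
    with p prime_ge_2_nat[OF p] have "odd p" by (intro prime_odd_nat) auto
    then show ?thesis by (simp add: minus_one_power_iff)
  qed (use False in \<open>simp add: minus_one_power_iff\<close>)
  moreover have "int p ^ (2 * (multiplicity p n + 1)) dvd hbinom m (p * n) - hbinom m n"
    using hbinom_prime_mult_cong[OF p False] by (simp add: cong_iff_dvd_diff cong_sym_eq)
  ultimately show ?thesis by (simp add: signed_hbinom_def right_diff_distrib[symmetric])
qed

definition Isum :: "(nat \<Rightarrow> int) \<Rightarrow> nat \<Rightarrow> int" where
  "Isum g q = (\<Sum>k\<in>Iset q. (-1) ^ omega (q div k) * g k)"

lemma finite_Iset: "finite (Iset q)"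
proof (cases "q = 0")
  case False
  then have "Iset q \<subseteq> {1..q}" by (auto simp: Iset_def dvd_imp_le)
  then show ?thesis by (rule finite_subset) simp
qed (simp add: Iset_def)

lemma omega_prime_mult:
  assumes "prime p" "\<not> p dvd c" "c > 0"
  shows "omega (p * c) = Suc (omega c)"
proof -
  have "prime_factors (p * c) = insert p (prime_factors c)"
    using assms by (simp add: prime_factors_product prime_prime_factors)
  moreover have "p \<notin> prime_factors c" using assms by auto
  ultimately show ?thesis by (simp add: omega_def)
qed

lemma Iset_mult_prime:
  assumes p: "prime p" and k: "k \<in> Iset q" and dvd: "p dvd q div k"
  shows "p * k \<in> Iset q" "\<not> p dvd q div (p * k)"
    and "omega (q div k) = Suc (omega (q div (p * k)))"
proof -
  obtain c where c: "q div k = p * c" using dvd by blast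
  have k0: "k > 0" "k dvd q" and sq: "squarefree (p * c)" using k c by (auto simp: Iset_def)
  then have "c > 0" by (auto intro: Nat.gr0I)
  have "\<not> p dvd c"
  proof
    assume "p dvd c"
    then have "p\<^sup>2 dvd p * c" by (simp add: power2_eq_square)
    with sq have "is_unit p" by (simp add: squarefree_def)
    with p show False by simp
  qed
  have "q = p * k * c" using k0 c by (metis dvd_mult_div_cancel mult.assoc mult.left_commute)
  then have qc: "q div (p * k) = c" using k0 p by (simp add: prime_gt_0_nat)
  show "p * k \<in> Iset q" using k0 p \<open>q = p * k * c\<close> qc sq
    by (auto simp: Iset_def prime_gt_0_nat intro: squarefree_multD)
  show "\<not> p dvd q div (p * k)" using qc \<open>\<not> p dvd c\<close> by simp
  show "omega (q div k) = Suc (omega (q div (p * k)))"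
    using c qc omega_prime_mult[OF p \<open>\<not> p dvd c\<close> \<open>c > 0\<close>] by simp
qed

lemma Iset_div_prime:
  assumes p: "prime p" and k: "k \<in> Iset q" and ndvd: "\<not> p dvd q div k" and "p dvd q"
  shows "p * (k div p) = k" "k div p \<in> Iset q" "p dvd q div (k div p)"
    and "multiplicity p (k div p) + 1 = multiplicity p q"
proof -
  define c where "c = q div k"
  have k0: "k > 0" "k dvd q" "squarefree c" using k by (auto simp: Iset_def c_def)
  then have q: "q = k * c" "c > 0" by (auto simp: c_def intro: Nat.gr0I)
  have "multiplicity p q = multiplicity p k + multiplicity p c"
    using p k0 q by (simp add: prime_elem_multiplicity_mult_distrib)
  also have "multiplicity p c = 0" using ndvd by (simp add: c_def not_dvd_imp_multiplicity_0)
  finally have mk: "multiplicity p q = multiplicity p k" by simp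
  have "multiplicity p q > 0"
    using p \<open>p dvd q\<close> \<open>q = k * c\<close> k0 q by (simp add: prime_multiplicity_gt_zero_iff)
  then have "p dvd k" using mk not_dvd_imp_multiplicity_0[of p k] by (cases "p dvd k") auto
  then obtain n where kn: "k = p * n" by blast
  have "n > 0" using k0(1) unfolding kn by simp
  have kp: "k div p = n" using kn p by (simp add: prime_gt_0_nat)
  then show "p * (k div p) = k" using kn by simp
  have qn: "q div n = p * c" using kn q \<open>n > 0\<close> by simp
  then show "p dvd q div (k div p)" using kp by simp
  have "coprime p c" using p ndvd by (simp add: c_def prime_imp_coprime)
  then have "squarefree (p * c)" using squarefree_mult_coprime squarefree_prime[OF p] k0(3) by blast
  then show "k div p \<in> Iset q" using kp qn kn q \<open>n > 0\<close> by (simp add: Iset_def)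
  show "multiplicity p (k div p) + 1 = multiplicity p q"
    using mk kn \<open>n > 0\<close> p by (simp add: prime_gt_0_nat prime_elem_multiplicity_mult_distrib)
qed

lemma Isum_prime_split:
  assumes p: "prime p" and "p dvd q"
  shows "Isum g q = (\<Sum>k | k \<in> Iset q \<and> \<not> p dvd q div k. (-1) ^ omega (q div k) * (g k - g (k div p)))"
proof -
  define A where "A = {k \<in> Iset q. \<not> p dvd q div k}"
  define B where "B = {k \<in> Iset q. p dvd q div k}"
  define f where "f k = (-1 :: int) ^ omega (q div k) * g k" for k
  have "Isum g q = sum f A + sum f B"
    unfolding Isum_def f_def A_def B_def
    by (subst sum.union_disjoint[symmetric]) (auto simp: finite_Iset intro: sum.cong)
  also have "sum f B = (\<Sum>k\<in>A. f (k div p))"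
  proof (rule sum.reindex_bij_witness[where i="\<lambda>k. k div p" and j="\<lambda>k. p * k"])
    show "p * (k div p) = k" "k div p \<in> B" if "k \<in> A" for k
      using Iset_div_prime[OF p _ _ \<open>p dvd q\<close>] that by (auto simp: A_def B_def)
    show "p * k div p = k" "p * k \<in> A" if "k \<in> B" for k
      using Iset_mult_prime[OF p] that p by (auto simp: A_def B_def prime_gt_0_nat)
  qed (use p in \<open>simp add: prime_gt_0_nat\<close>)
  also have "(\<Sum>k\<in>A. f (k div p)) = (\<Sum>k\<in>A. - ((-1) ^ omega (q div k) * g (k div p)))"
  proof (rule sum.cong[OF refl])
    fix k assume "k \<in> A"
    then have "omega (q div (k div p)) = Suc (omega (q div k))"
      using Iset_div_prime[OF p _ _ \<open>p dvd q\<close>, of k] Iset_mult_prime(3)[OF p, of "k div p" q]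
      by (auto simp: A_def)
    then show "f (k div p) = - ((-1) ^ omega (q div k) * g (k div p))" by (simp add: f_def)
  qed
  finally have "Isum g q = sum f A + (\<Sum>k\<in>A. - ((-1) ^ omega (q div k) * g (k div p)))" .
  also have "\<dots> = (\<Sum>k\<in>A. (-1) ^ omega (q div k) * (g k - g (k div p)))"
    by (simp add: f_def sum_subtractf sum_negf right_diff_distrib)
  finally show ?thesis by (simp only: A_def)
qed

lemma Isum_prime_power_dvd:
  assumes hyp: "\<And>p n. prime p \<Longrightarrow> n \<ge> 1 \<Longrightarrow> int p ^ (2 * (multiplicity p n + 1)) dvd g (p * n) - g n"
    and p: "prime p"
  shows "int p ^ (2 * multiplicity p q) dvd Isum g q"
proof (cases "p dvd q")
  case True
  show ?thesis
    unfolding Isum_prime_split[OF p True]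
  proof (intro dvd_sum dvd_mult)
    fix k assume "k \<in> {k. k \<in> Iset q \<and> \<not> p dvd q div k}"
    then have k: "p * (k div p) = k" "k div p \<in> Iset q" "multiplicity p (k div p) + 1 = multiplicity p q"
      using Iset_div_prime[OF p _ _ True] by auto
    then have "k div p \<ge> 1" by (simp add: Iset_def)
    from hyp[OF p this] show "int p ^ (2 * multiplicity p q) dvd g k - g (k div p)"
      unfolding k by simp
  qed
qed (simp add: not_dvd_imp_multiplicity_0)

lemma int_dvd_if_prime_powers_dvd:
  fixes a :: nat and b :: int
  assumes "a \<noteq> 0" and "\<And>p. prime p \<Longrightarrow> int p ^ multiplicity p a dvd b"
  shows "int a dvd b"
proof (cases "b = 0")
  case False
  show ?thesis
  proof (rule multiplicity_le_imp_dvd)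
    fix P :: int assume P: "prime P"
    define p where "p = nat P"
    have P_eq: "P = int p" and p: "prime p"
      using P by (simp_all add: p_def prime_ge_0_int)
    define k where "k = multiplicity P (int a)"
    have "int (p ^ k) dvd int a" unfolding k_def P_eq of_nat_power by (rule multiplicity_dvd)
    then have "p ^ k dvd a" by (simp only: of_nat_dvd_iff)
    then have "k \<le> multiplicity p a"
      using assms(1) p by (intro multiplicity_geI) (auto simp: prime_gt_1_nat)
    then have "P ^ k dvd b"
      using assms(2)[OF p] unfolding P_eq by (meson dvd_trans le_imp_power_dvd)
    then show "multiplicity P (int a) \<le> multiplicity P b"
      unfolding k_def[symmetric] using P False by (intro multiplicity_geI) (auto simp: prime_elem_not_unit)
  qed (use assms in simp)
qed simp

lemma Isum_square_dvd:
  assumes "\<And>p n. prime p \<Longrightarrow> n \<ge> 1 \<Longrightarrow> int p ^ (2 * (multiplicity p n + 1)) dvd g (p * n) - g n"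
    and "q \<ge> 1"
  shows "int q ^ 2 dvd Isum g q"
proof -
  have "int (q ^ 2) dvd Isum g q"
  proof (rule int_dvd_if_prime_powers_dvd)
    fix p :: nat assume p: "prime p"
    then have "multiplicity p (q ^ 2) = 2 * multiplicity p q"
      using assms(2) by (simp add: prime_elem_multiplicity_power_distrib)
    then show "int p ^ multiplicity p (q ^ 2) dvd Isum g q"
      using Isum_prime_power_dvd[OF assms(1) p] by simp
  qed (use assms in simp)
  then show ?thesis by simp
qed

lemma sum_lower_triangular_assoc:
  fixes X Y Z :: "nat \<Rightarrow> nat \<Rightarrow> 'a :: semiring_0"
  assumes "\<And>v u. 1 \<le> v \<Longrightarrow> v < u \<Longrightarrow> Y v u = 0"
  shows "(\<Sum>v=1..s. X s v * (\<Sum>u=1..v. Y v u * Z u t))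
       = (\<Sum>u=1..s. (\<Sum>v=1..s. X s v * Y v u) * Z u t)"
proof -
  have "(\<Sum>v=1..s. X s v * (\<Sum>u=1..v. Y v u * Z u t))
      = (\<Sum>v=1..s. \<Sum>u=1..s. X s v * (Y v u * Z u t))"
  proof (rule sum.cong[OF refl])
    fix v assume v: "v \<in> {1..s}"
    have "(\<Sum>u=1..v. Y v u * Z u t) = (\<Sum>u=1..s. Y v u * Z u t)"
      by (rule sum.mono_neutral_left) (use v assms in auto)
    then show "X s v * (\<Sum>u=1..v. Y v u * Z u t) = (\<Sum>u=1..s. X s v * (Y v u * Z u t))"
      by (simp add: sum_distrib_left)
  qed
  also have "\<dots> = (\<Sum>u=1..s. (\<Sum>v=1..s. X s v * Y v u) * Z u t)"
    by (subst sum.swap) (simp add: sum_distrib_right mult.assoc)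
  finally show ?thesis .
qed

function dvd_inverse :: "(nat \<Rightarrow> nat \<Rightarrow> 'a :: ring_1) \<Rightarrow> nat \<Rightarrow> nat \<Rightarrow> 'a" where
  "dvd_inverse A s t =
     (if s = t then 1 else if t dvd s then - (\<Sum>u\<in>{1..<s}. A s u * dvd_inverse A u t) else 0)"
  by auto
termination by (relation "measure (\<lambda>(A, s, t). s)") auto

declare dvd_inverse.simps [simp del]

locale dvd_unitriangular =
  fixes A :: "nat \<Rightarrow> nat \<Rightarrow> 'a :: ring_1"
  assumes off_dvd: "\<And>s t. 1 \<le> s \<Longrightarrow> 1 \<le> t \<Longrightarrow> \<not> t dvd s \<Longrightarrow> A s t = 0"
    and diag: "\<And>t. 1 \<le> t \<Longrightarrow> A t t = 1"
begin

lemma above_diag: "1 \<le> s \<Longrightarrow> s < t \<Longrightarrow> A s t = 0"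
  using off_dvd[of s t] nat_dvd_not_less[of s t] by simp

lemma inverse_off_dvd: "\<not> t dvd s \<Longrightarrow> dvd_inverse A s t = 0"
  by (subst dvd_inverse.simps) auto

lemma inverse_diag: "dvd_inverse A t t = 1"
  by (subst dvd_inverse.simps) auto

lemma inverse_Ints:
  assumes "\<And>s t. 1 \<le> s \<Longrightarrow> 1 \<le> t \<Longrightarrow> A s t \<in> \<int>"
  shows "dvd_inverse A s t \<in> \<int>"
proof (induction s rule: less_induct)
  case (less s)
  have "(\<Sum>u\<in>{1..<s}. A s u * dvd_inverse A u t) \<in> \<int>"
    by (intro Ints_sum Ints_mult) (use less assms in auto)
  then show ?case by (subst dvd_inverse.simps) auto
qed

lemma mult_inverse:
  assumes "1 \<le> s" "1 \<le> t"
  shows "(\<Sum>u=1..s. A s u * dvd_inverse A u t) = (if s = t then 1 else 0)"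
proof -
  have "(\<Sum>u=1..s. A s u * dvd_inverse A u t)
      = dvd_inverse A s t + (\<Sum>u\<in>{1..<s}. A s u * dvd_inverse A u t)"
    using assms diag by (simp add: atLeastLessThanSuc_atLeastAtMost[symmetric] ac_simps)
  also have "\<dots> = (if s = t then 1 else 0)"
  proof (cases "t dvd s")
    case True
    moreover have "(\<Sum>u\<in>{1..<t}. A t u * dvd_inverse A u t) = 0"
      by (intro sum.neutral) (auto simp: inverse_off_dvd nat_dvd_not_less)
    ultimately show ?thesis by (subst dvd_inverse.simps) auto
  next
    case False
    have "A s u * dvd_inverse A u t = 0" if u: "u \<in> {1..<s}" for u
    proof (cases "t dvd u")
      case True
      then have "\<not> u dvd s" using False dvd_trans by blast
      then show ?thesis using u off_dvd by simp
    qed (simp add: inverse_off_dvd)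
    moreover have "s \<noteq> t" using False by auto
    ultimately show ?thesis using False by (simp add: inverse_off_dvd)
  qed
  finally show ?thesis .
qed

lemma dvd_unitriangular_inverse: "dvd_unitriangular (dvd_inverse A)"
  by unfold_locales (simp_all add: inverse_off_dvd inverse_diag)

lemma inverse_mult:
  assumes s: "1 \<le> s" and t: "1 \<le> t"
  shows "(\<Sum>u=1..s. dvd_inverse A s u * A u t) = (if s = t then 1 else 0)"
proof -
  \<comment> \<open>The right inverse is again unitriangular, so it has a right inverse \<open>B\<close>;
    associativity gives \<open>A = B\<close>, hence the right inverse is also a left inverse.\<close>
  interpret inv: dvd_unitriangular "dvd_inverse A" by (rule dvd_unitriangular_inverse)
  let ?B = "dvd_inverse (dvd_inverse A)"
  have "A s t = ?B s t" if "1 \<le> s" for s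
  proof -
    have "A s t = (\<Sum>v=1..s. A s v * (if v = t then 1 else 0))"
      using t above_diag[OF that] by (simp add: if_distrib[of "\<lambda>x. _ * x"] sum.delta cong: if_cong)
    also have "\<dots> = (\<Sum>v=1..s. A s v * (\<Sum>u=1..v. dvd_inverse A v u * ?B u t))"
    proof (rule sum.cong[OF refl])
      fix v assume "v \<in> {1..s}"
      then show "A s v * (if v = t then 1 else 0) = A s v * (\<Sum>u=1..v. dvd_inverse A v u * ?B u t)"
        using inv.mult_inverse[of v t] t by simp
    qed
    also have "\<dots> = (\<Sum>u=1..s. (\<Sum>v=1..s. A s v * dvd_inverse A v u) * ?B u t)"
      by (rule sum_lower_triangular_assoc) (rule inv.above_diag)
    also have "\<dots> = (\<Sum>u=1..s. (if s = u then 1 else 0) * ?B u t)"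
    proof (rule sum.cong[OF refl])
      fix u assume "u \<in> {1..s}"
      then show "(\<Sum>v=1..s. A s v * dvd_inverse A v u) * ?B u t = (if s = u then 1 else 0) * ?B u t"
        using mult_inverse[of s u] that by simp
    qed
    also have "\<dots> = ?B s t"
      using that by (simp add: if_distrib[of "\<lambda>x. x * _"] cong: if_cong)
    finally show ?thesis .
  qed
  then have "(\<Sum>u=1..s. dvd_inverse A s u * A u t) = (\<Sum>u=1..s. dvd_inverse A s u * ?B u t)"
    by (intro sum.cong) auto
  also have "\<dots> = (if s = t then 1 else 0)" using s t by (rule inv.mult_inverse)
  finally show ?thesis .
qed

end

lemma Cmat_eq_Isum:
  assumes "t dvd s"
  shows "Cmat w s t = (-1) ^ (s * w) / of_nat ((s div t)\<^sup>2) * of_int (Isum (signed_hbinom (t * w)) (s div t))"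
proof -
  have "(-1) ^ omega (s div (k * t)) * (-1) ^ (k * t * w) *
          ((of_int (int k * (int t * int w - 1) - 1) :: rat) gchoose (k - 1))
        = of_int ((-1) ^ omega (s div t div k) * signed_hbinom (t * w) k)" for k
  proof -
    have "s div (k * t) = s div t div k" by (metis div_mult2_eq mult.commute)
    then show ?thesis by (simp add: signed_hbinom_def of_int_hbinom mult.assoc)
  qed
  then show ?thesis
    using assms by (simp add: Cmat_def Isum_def of_int_sum)
qed

lemma Cmat_Ints:
  assumes "s \<ge> 1" "t \<ge> 1"
  shows "Cmat w s t \<in> \<int>"
proof (cases "t dvd s")
  case True
  then have "s div t \<ge> 1" using assms by (auto intro: Nat.gr0I)
  then have "int (s div t) ^ 2 dvd Isum (signed_hbinom (t * w)) (s div t)"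
    by (intro Isum_square_dvd signed_hbinom_prime_mult_dvd)
  then obtain z where "Isum (signed_hbinom (t * w)) (s div t) = int (s div t) ^ 2 * z" by blast
  with True \<open>s div t \<ge> 1\<close> have "Cmat w s t = (-1) ^ (s * w) * of_int z"
    by (simp add: Cmat_eq_Isum)
  then show ?thesis by simp
qed (simp add: Cmat_def)

lemma Cmat_off_dvd: "\<not> t dvd s \<Longrightarrow> Cmat w s t = 0"
  by (simp add: Cmat_def)

lemma Cmat_diag:
  assumes "t \<ge> 1"
  shows "Cmat w t t = 1"
proof -
  have "Iset 1 = {1}" by (auto simp: Iset_def)
  moreover have "(-1 :: rat) ^ (t * w) * (-1) ^ (t * w) = 1"
    by (simp flip: power_mult_distrib)
  ultimately show ?thesis using assms by (simp add: Cmat_def omega_def)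
qed

theorem mainTheorem2:
  fixes w :: nat
  assumes "w \<ge> 1"
  shows "(\<forall>s\<ge>1. \<forall>t\<ge>1. Cmat w s t \<in> \<int>)
    \<and> (\<forall>s\<ge>1. \<forall>t\<ge>1. \<not> t dvd s \<longrightarrow> Cmat w s t = 0)
    \<and> (\<forall>t\<ge>1. Cmat w t t = 1)
    \<and> (\<exists>D :: nat \<Rightarrow> nat \<Rightarrow> rat.
          (\<forall>s\<ge>1. \<forall>t\<ge>1. D s t \<in> \<int>)
        \<and> (\<forall>s\<ge>1. \<forall>t\<ge>1. \<not> t dvd s \<longrightarrow> D s t = 0)
        \<and> (\<forall>s\<ge>1. \<forall>t\<ge>1. (\<Sum>u=1..s. Cmat w s u * D u t) = (if s = t then 1 else 0))
        \<and> (\<forall>s\<ge>1. \<forall>t\<ge>1. (\<Sum>u=1..s. D s u * Cmat w u t) = (if s = t then 1 else 0)))"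
proof -
  interpret C: dvd_unitriangular "Cmat w"
    by unfold_locales (simp_all add: Cmat_off_dvd Cmat_diag)
  let ?D = "dvd_inverse (Cmat w)"
  have "\<forall>s\<ge>1. \<forall>t\<ge>1. Cmat w s t \<in> \<int>" by (simp add: Cmat_Ints)
  moreover have "\<forall>s\<ge>1. \<forall>t\<ge>1. \<not> t dvd s \<longrightarrow> Cmat w s t = 0" by (simp add: Cmat_off_dvd)
  moreover have "\<forall>t\<ge>1. Cmat w t t = 1" by (simp add: Cmat_diag)
  moreover have "\<forall>s\<ge>1. \<forall>t\<ge>1. ?D s t \<in> \<int>" by (simp add: C.inverse_Ints Cmat_Ints)
  moreover have "\<forall>s\<ge>1. \<forall>t\<ge>1. \<not> t dvd s \<longrightarrow> ?D s t = 0" by (simp add: C.inverse_off_dvd)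
  moreover have "\<forall>s\<ge>1. \<forall>t\<ge>1. (\<Sum>u=1..s. Cmat w s u * ?D u t) = (if s = t then 1 else 0)"
    using C.mult_inverse by blast
  moreover have "\<forall>s\<ge>1. \<forall>t\<ge>1. (\<Sum>u=1..s. ?D s u * Cmat w u t) = (if s = t then 1 else 0)"
    using C.inverse_mult by blast
  ultimately show ?thesis by blast
qed

end
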